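(* Define $\mathbb E_x(t_1)=\int_0^\infty \frac1\alpha\log\Big(\frac{y}{x^\alpha}+1\Big)e^{-y}\,dy$ for $x>0$ (the expected first jump time $t_1=\frac1\alpha\log\frac{\varepsilon_1+x^\alpha}{x^\alpha}$ of the process started at $x$), and $$\mathbb E(t_1)=\int_0^\infty \mathbb E_x(t_1)f_*(x)\,m(dx).$$ Then $\mathbb E(t_1)<\infty$ if and only if $\mathbb E\log\theta_1>-\infty$, i.e. $\int_0^1\log z\,h(z)z\,dz>-\infty$, in which case $$\mathbb E(t_1)=\mathbb E(-\log\theta_1)=-\int_0^1\log z\,h(z)z\,dz.$$
   Context: Fix $\alpha>0$ and a Borel function $h\colon(0,1)\to[0,\infty)$ with $\int_0^1 h(r)r\,dr=1$; $m(dx)=x\,dx$ on $(0,\infty)$. Let $\varepsilon_n$ be i.i.d. exponential with mean 1 and $\theta_n$ i.i.d. on $(0,1)$ with $P(\theta_n\le r)=\int_0^r h(z)z\,dz$, all independent. $f_*$ is the density with respect to $m$ of the random variable $X_\infty=\big(\sum_{k\ge1}\varepsilon_k\prod_{j=1}^k\theta_j^\alpha\big)^{1/\alpha}$ (equivalently, the density of the unique stationary distribution of the Markov chain $X_n=\theta_n(\varepsilon_n+X_{n-1}^\alpha)^{1/\alpha}$). *)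

theory Defs
  imports "HOL-Probability.Probability"
begin

text \<open>The random variable X_infinity = (sum_{k>=1} eps_k prod_{j=1}^k theta_j^alpha)^(1/alpha),
  with sequences indexed from 1 (the index-0 entries are unused).\<close>
definition X_inf :: "real \<Rightarrow> (nat \<Rightarrow> 'a \<Rightarrow> real) \<Rightarrow> (nat \<Rightarrow> 'a \<Rightarrow> real) \<Rightarrow> 'a \<Rightarrow> real" where
  "X_inf \<alpha> \<epsilon> \<theta> \<omega> =
     (\<Sum>k. \<epsilon> (Suc k) \<omega> * (\<Prod>j\<in>{1..Suc k}. \<theta> j \<omega> powr \<alpha>)) powr (1 / \<alpha>)"

definition m_meas :: "real measure" where
  "m_meas = density lborel (\<lambda>x. ennreal (indicator {0<..} x * x))"

definition Ex_t1 :: "real \<Rightarrow> real \<Rightarrow> ennreal" where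
  "Ex_t1 \<alpha> x = (\<integral>\<^sup>+ y \<in> {0<..}. ennreal ((1 / \<alpha>) * ln (y / x powr \<alpha> + 1) * exp (- y)) \<partial>lborel)"

definition E_t1 :: "real \<Rightarrow> (real \<Rightarrow> real) \<Rightarrow> ennreal" where
  "E_t1 \<alpha> f = (\<integral>\<^sup>+ x \<in> {0<..}. Ex_t1 \<alpha> x * ennreal (f x) \<partial>m_meas)"

end

theory Submission
  imports Defs
begin

(* Let X_0 = X_inf(eps, theta) and let X_1 be the same functional of the shifted sequences. Then
   X_0 = theta_1 (eps_1 + X_1^alpha)^(1/alpha), the pair (eps_1, theta_1) is independent of X_1, and X_1 has
   the law of X_0. Averaging E_x(t_1) against the law of X_0, i.e. of X_1, and integrating out eps_1 turns
   E(t_1) into the expectation of t_1 = (1/alpha) log((eps_1 + X_1^alpha) / X_1^alpha). Pointwise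
   t_1 + log theta_1 = log X_0 - log X_1 is a difference of identically distributed variables, and for such
   a difference E(V - U)^+ = E(U - V)^+ holds without any integrability. Hence E(t_1) = E(-log theta_1)
   as an identity in [0, infinity], which contains both claims. *)

(* Layer cake: the two sides are the integrals over t of P(U < t <= V) and of P(V < t <= U), which agree
   because P(t <= U) = P(t <= V). *)
lemma nn_integral_pos_diff_swap_if_distr_eq:
  fixes U V :: "'a \<Rightarrow> real"
  assumes "finite_measure M"
    and [measurable]: "U \<in> borel_measurable M" "V \<in> borel_measurable M"
    and distr_eq: "distr M borel U = distr M borel V"
  shows "(\<integral>\<^sup>+\<omega>. ennreal (V \<omega> - U \<omega>) \<partial>M) = (\<integral>\<^sup>+\<omega>. ennreal (U \<omega> - V \<omega>) \<partial>M)"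
proof -
  interpret finite_measure M by fact
  interpret pair_sigma_finite M lborel ..
  have layer_cake: "(\<integral>\<^sup>+\<omega>. ennreal (B \<omega> - A \<omega>) \<partial>M) =
      (\<integral>\<^sup>+t. emeasure M {\<omega>\<in>space M. A \<omega> < t \<and> t \<le> B \<omega>} \<partial>lborel)"
    if [measurable]: "A \<in> borel_measurable M" "B \<in> borel_measurable M" for A B :: "'a \<Rightarrow> real"
  proof -
    have interval: "ennreal (b - a) = (\<integral>\<^sup>+t. indicator {t. a < t \<and> t \<le> b} t \<partial>lborel)" for a b :: real
    proof (cases "a \<le> b")
      case True
      have "{t. a < t \<and> t \<le> b} = {a<..b}" by auto
      with True show ?thesis by simp
    qed (simp add: ennreal_neg)
    have slice: "(\<integral>\<^sup>+\<omega>. indicator {t. A \<omega> < t \<and> t \<le> B \<omega>} t \<partial>M) =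
        emeasure M {\<omega>\<in>space M. A \<omega> < t \<and> t \<le> B \<omega>}" for t
    proof -
      have "(\<integral>\<^sup>+\<omega>. indicator {t. A \<omega> < t \<and> t \<le> B \<omega>} t \<partial>M) =
          (\<integral>\<^sup>+\<omega>. indicator {\<omega>\<in>space M. A \<omega> < t \<and> t \<le> B \<omega>} \<omega> \<partial>M)"
        by (rule nn_integral_cong) (simp add: indicator_def)
      also have "\<dots> = emeasure M {\<omega>\<in>space M. A \<omega> < t \<and> t \<le> B \<omega>}"
        by (rule nn_integral_indicator) measurable
      finally show ?thesis .
    qed
    have "(\<integral>\<^sup>+\<omega>. ennreal (B \<omega> - A \<omega>) \<partial>M) =
        (\<integral>\<^sup>+\<omega>. (\<integral>\<^sup>+t. indicator {t. A \<omega> < t \<and> t \<le> B \<omega>} t \<partial>lborel) \<partial>M)"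
      by (simp only: interval)
    also have "\<dots> = (\<integral>\<^sup>+t. (\<integral>\<^sup>+\<omega>. indicator {t. A \<omega> < t \<and> t \<le> B \<omega>} t \<partial>M) \<partial>lborel)"
      by (rule Fubini'[symmetric]) measurable
    finally show ?thesis by (simp only: slice)
  qed
  have tail_diff_eq: "emeasure M {\<omega>\<in>space M. U \<omega> < t \<and> t \<le> V \<omega>} = emeasure M {\<omega>\<in>space M. V \<omega> < t \<and> t \<le> U \<omega>}" for t
  proof -
    have "measure (distr M borel V) {t..} = measure (distr M borel U) {t..}"
      using distr_eq by simp
    then have "measure M {\<omega>\<in>space M. t \<le> V \<omega>} = measure M {\<omega>\<in>space M. t \<le> U \<omega>}"
      by (simp add: measure_distr vimage_def Int_def conj_commute)
    moreover have "measure M {\<omega>\<in>space M. t \<le> V \<omega>} =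
        measure M {\<omega>\<in>space M. U \<omega> < t \<and> t \<le> V \<omega>} + measure M {\<omega>\<in>space M. t \<le> U \<omega> \<and> t \<le> V \<omega>}"
      by (subst finite_measure_Union[symmetric]) (auto intro!: arg_cong[where f = "measure M"])
    moreover have "measure M {\<omega>\<in>space M. t \<le> U \<omega>} =
        measure M {\<omega>\<in>space M. V \<omega> < t \<and> t \<le> U \<omega>} + measure M {\<omega>\<in>space M. t \<le> U \<omega> \<and> t \<le> V \<omega>}"
      by (subst finite_measure_Union[symmetric]) (auto intro!: arg_cong[where f = "measure M"])
    ultimately show ?thesis by (simp add: emeasure_eq_measure)
  qed
  show ?thesis
    by (simp only: layer_cake tail_diff_eq \<open>U \<in> borel_measurable M\<close> \<open>V \<in> borel_measurable M\<close>)
qed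

(* a = min a b + (V - U)^+ and b = min a b + (U - V)^+ *)
lemma nn_integral_eq_if_diff_identically_distributed:
  fixes a b U V :: "'a \<Rightarrow> real"
  assumes "finite_measure M"
    and [measurable]: "a \<in> borel_measurable M" "b \<in> borel_measurable M"
      "U \<in> borel_measurable M" "V \<in> borel_measurable M"
    and distr_eq: "distr M borel U = distr M borel V"
    and diff: "AE \<omega> in M. 0 \<le> a \<omega> \<and> 0 \<le> b \<omega> \<and> a \<omega> - b \<omega> = V \<omega> - U \<omega>"
  shows "(\<integral>\<^sup>+\<omega>. ennreal (a \<omega>) \<partial>M) = (\<integral>\<^sup>+\<omega>. ennreal (b \<omega>) \<partial>M)"
proof -
  interpret finite_measure M by fact
  have min_plus: "ennreal x = ennreal (min x y) + ennreal (x - y)" if "0 \<le> x" "0 \<le> y" for x y :: real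
    using that by (cases "y \<le> x") (simp_all add: ennreal_neg flip: ennreal_plus)
  have "(\<integral>\<^sup>+\<omega>. ennreal (a \<omega>) \<partial>M) = (\<integral>\<^sup>+\<omega>. ennreal (min (a \<omega>) (b \<omega>)) + ennreal (V \<omega> - U \<omega>) \<partial>M)"
    by (rule nn_integral_cong_AE, rule eventually_mono[OF diff]) (metis min_plus)
  also have "\<dots> = (\<integral>\<^sup>+\<omega>. ennreal (min (a \<omega>) (b \<omega>)) \<partial>M) + (\<integral>\<^sup>+\<omega>. ennreal (V \<omega> - U \<omega>) \<partial>M)"
    by (rule nn_integral_add) auto
  also have "\<dots> = (\<integral>\<^sup>+\<omega>. ennreal (min (a \<omega>) (b \<omega>)) \<partial>M) + (\<integral>\<^sup>+\<omega>. ennreal (U \<omega> - V \<omega>) \<partial>M)"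
    by (simp add: nn_integral_pos_diff_swap_if_distr_eq[OF finite_measure_axioms _ _ distr_eq])
  also have "\<dots> = (\<integral>\<^sup>+\<omega>. ennreal (min (a \<omega>) (b \<omega>)) + ennreal (U \<omega> - V \<omega>) \<partial>M)"
    by (rule nn_integral_add[symmetric]) auto
  also have "\<dots> = (\<integral>\<^sup>+\<omega>. ennreal (b \<omega>) \<partial>M)"
  proof (rule nn_integral_cong_AE, rule eventually_mono[OF diff])
    fix \<omega> assume \<omega>: "0 \<le> a \<omega> \<and> 0 \<le> b \<omega> \<and> a \<omega> - b \<omega> = V \<omega> - U \<omega>"
    then have "U \<omega> - V \<omega> = b \<omega> - a \<omega>" by linarith
    with \<omega> show "ennreal (min (a \<omega>) (b \<omega>)) + ennreal (U \<omega> - V \<omega>) = ennreal (b \<omega>)"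
      using min_plus[of "b \<omega>" "a \<omega>"] by (simp add: min.commute)
  qed
  finally show ?thesis .
qed

(* The sequences (eps_k) and (theta_k) are merged into one sequence indexed by nat + nat, with Inl k for
   eps_k and Inr k for theta_k; as in X_inf, index 0 is unused. *)
definition shift_seq :: "nat + nat \<Rightarrow> nat + nat" where
  "shift_seq = map_sum Suc Suc"

definition perpetuity_term :: "real \<Rightarrow> (nat + nat \<Rightarrow> real) \<Rightarrow> nat \<Rightarrow> real" where
  "perpetuity_term \<alpha> w k = w (Inl (Suc k)) * (\<Prod>j\<in>{1..Suc k}. w (Inr j) powr \<alpha>)"

definition perpetuity :: "real \<Rightarrow> (nat + nat \<Rightarrow> real) \<Rightarrow> real" where
  "perpetuity \<alpha> w = (\<Sum>k. perpetuity_term \<alpha> w k) powr (1 / \<alpha>)"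

lemma X_inf_eq_perpetuity: "X_inf \<alpha> \<epsilon> \<theta> \<omega> = perpetuity \<alpha> (\<lambda>i. case_sum \<epsilon> \<theta> i \<omega>)"
  by (simp add: X_inf_def perpetuity_def perpetuity_term_def)

lemma borel_measurable_perpetuity [measurable]:
  "perpetuity \<alpha> \<in> borel_measurable (PiM UNIV (\<lambda>_. borel))"
  unfolding perpetuity_def perpetuity_term_def by measurable

lemma measurable_comp_shift_seq [measurable]:
  "(\<lambda>w. w \<circ> shift_seq) \<in> measurable (PiM UNIV (\<lambda>_. M)) (PiM UNIV (\<lambda>_. M))"
  unfolding comp_def by (rule measurable_PiM_single') (auto simp: space_PiM)

(* The sum of a non-summable series is the junk value THE s. False. *)
lemma summable_if_perpetuity_ne_undefined:
  assumes "perpetuity \<alpha> w \<noteq> (THE s. False) powr (1 / \<alpha>)"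
  shows "summable (perpetuity_term \<alpha> w)"
proof (rule ccontr)
  assume "\<not> summable (perpetuity_term \<alpha> w)"
  then have "(\<lambda>s. perpetuity_term \<alpha> w sums s) = (\<lambda>s. False)" by (auto simp: summable_def)
  with assms show False by (simp add: perpetuity_def suminf_def)
qed

lemma perpetuity_fun_upd_Inl_shift_seq:
  "perpetuity \<alpha> (w(Inl 1 := x) \<circ> shift_seq) = perpetuity \<alpha> (w \<circ> shift_seq)"
  by (simp add: perpetuity_def perpetuity_term_def shift_seq_def)

lemma perpetuity_term_Suc:
  "perpetuity_term \<alpha> w (Suc k) = w (Inr 1) powr \<alpha> * perpetuity_term \<alpha> (w \<circ> shift_seq) k"
proof -
  have "(\<Prod>j\<in>{1..Suc (Suc k)}. w (Inr j) powr \<alpha>) = w (Inr 1) powr \<alpha> * (\<Prod>j\<in>{1..Suc k}. w (Inr (Suc j)) powr \<alpha>)"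
    by (subst prod.atLeast_Suc_atMost, simp, subst prod.shift_bounds_cl_Suc_ivl, simp)
  then show ?thesis by (simp add: perpetuity_term_def shift_seq_def)
qed

lemma perpetuity_term_pos:
  assumes "\<And>i. 0 < w i"
  shows "0 < perpetuity_term \<alpha> w k"
proof -
  have "w i \<noteq> 0" for i using assms[of i] by simp
  with assms show ?thesis by (simp add: perpetuity_term_def prod_pos)
qed

lemma perpetuity_recursion:
  assumes "\<alpha> > 0" and pos: "\<And>i. 0 < w i"
    and summable: "summable (perpetuity_term \<alpha> (w \<circ> shift_seq))"
  shows "perpetuity \<alpha> w = w (Inr 1) * (w (Inl 1) + perpetuity \<alpha> (w \<circ> shift_seq) powr \<alpha>) powr (1 / \<alpha>)"
proof -
  define S where "S = (\<Sum>k. perpetuity_term \<alpha> (w \<circ> shift_seq) k)"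
  have "0 \<le> S"
    unfolding S_def using summable
    by (rule suminf_nonneg) (simp add: less_imp_le perpetuity_term_pos pos)
  then have S: "perpetuity \<alpha> (w \<circ> shift_seq) powr \<alpha> = S"
    using \<open>\<alpha> > 0\<close> by (simp add: perpetuity_def S_def powr_powr)
  have "(\<lambda>k. perpetuity_term \<alpha> w (Suc k)) sums (w (Inr 1) powr \<alpha> * S)"
    unfolding perpetuity_term_Suc S_def by (intro sums_mult summable_sums summable)
  then have "perpetuity_term \<alpha> w sums (w (Inr 1) powr \<alpha> * S + perpetuity_term \<alpha> w 0)"
    by (rule sums_Suc)
  then have "(\<Sum>k. perpetuity_term \<alpha> w k) = w (Inr 1) powr \<alpha> * (w (Inl 1) + S)"
    by (simp add: sums_iff perpetuity_term_def[of _ _ 0] algebra_simps)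
  then show ?thesis
    using \<open>\<alpha> > 0\<close> \<open>0 \<le> S\<close> pos[of "Inr 1"] pos[of "Inl 1"]
    by (simp add: perpetuity_def[of \<alpha> w] S powr_mult powr_powr)
qed

lemma ln_perpetuity_recursion:
  assumes "\<alpha> > 0" and pos: "\<And>i. 0 < w i"
    and summable: "summable (perpetuity_term \<alpha> (w \<circ> shift_seq))"
    and shift_pos: "0 < perpetuity \<alpha> (w \<circ> shift_seq)"
  shows "ln (perpetuity \<alpha> w) - ln (perpetuity \<alpha> (w \<circ> shift_seq)) =
    (1 / \<alpha>) * ln (w (Inl 1) / perpetuity \<alpha> (w \<circ> shift_seq) powr \<alpha> + 1) + ln (w (Inr 1))"
proof -
  define e t P where "e = w (Inl 1)" and "t = w (Inr 1)" and "P = perpetuity \<alpha> (w \<circ> shift_seq) powr \<alpha>"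
  have "0 < e" "0 < t" "0 < P" using pos shift_pos by (simp_all add: e_def t_def P_def)
  have "perpetuity \<alpha> w = t * (e + P) powr (1 / \<alpha>)"
    unfolding e_def t_def P_def by (rule perpetuity_recursion[OF \<open>\<alpha> > 0\<close> pos summable])
  then have "ln (perpetuity \<alpha> w) = ln t + (1 / \<alpha>) * ln (e + P)"
    using \<open>0 < e\<close> \<open>0 < t\<close> \<open>0 < P\<close> by (simp add: ln_mult ln_powr)
  moreover have "ln P = \<alpha> * ln (perpetuity \<alpha> (w \<circ> shift_seq))"
    using shift_pos by (simp add: P_def ln_powr)
  moreover have "ln (e / P + 1) = ln (e + P) - ln P"
    using \<open>0 < e\<close> \<open>0 < P\<close> by (simp add: field_simps ln_div)
  ultimately show ?thesis
    unfolding e_def[symmetric] t_def[symmetric] P_def[symmetric]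
    using \<open>\<alpha> > 0\<close> by (simp add: field_simps)
qed

lemma Ex_t1_eq_nn_integral_exponential:
  "Ex_t1 \<alpha> x = (\<integral>\<^sup>+y. ennreal ((1 / \<alpha>) * ln (y / x powr \<alpha> + 1))
     \<partial>density lborel (\<lambda>y. ennreal (exponential_density 1 y)))"
proof -
  have "Ex_t1 \<alpha> x = (\<integral>\<^sup>+y. ennreal (exponential_density 1 y) * ennreal ((1 / \<alpha>) * ln (y / x powr \<alpha> + 1)) \<partial>lborel)"
    unfolding Ex_t1_def
  proof (intro nn_integral_cong)
    fix y :: real
    show "ennreal ((1 / \<alpha>) * ln (y / x powr \<alpha> + 1) * exp (- y)) * indicator {0<..} y =
        ennreal (exponential_density 1 y) * ennreal ((1 / \<alpha>) * ln (y / x powr \<alpha> + 1))"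
      by (cases "y < 0"; cases "y = 0")
        (auto simp: exponential_density_def mult.commute simp flip: ennreal_mult')
  qed
  then show ?thesis by (subst nn_integral_density) auto
qed

lemma borel_measurable_Ex_t1 [measurable]: "Ex_t1 \<alpha> \<in> borel_measurable borel"
  unfolding Ex_t1_def by measurable

lemma sets_m_meas [measurable_cong]: "sets m_meas = sets borel"
  by (simp add: m_meas_def)

lemma E_t1_eq_nn_integral_distr:
  assumes "distributed M m_meas X (\<lambda>x. ennreal (f x))"
  shows "E_t1 \<alpha> f = (\<integral>\<^sup>+x. Ex_t1 \<alpha> x \<partial>distr M borel X)"
proof -
  note X = assms[unfolded distributed_def]
  have "AE x in m_meas. 0 < x"
    unfolding m_meas_def by (subst AE_density) (auto simp: indicator_def split: if_splits)
  then have "E_t1 \<alpha> f = (\<integral>\<^sup>+x. ennreal (f x) * Ex_t1 \<alpha> x \<partial>m_meas)"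
    unfolding E_t1_def by (auto intro!: nn_integral_cong_AE elim!: eventually_mono simp: mult.commute)
  also have "\<dots> = (\<integral>\<^sup>+x. Ex_t1 \<alpha> x \<partial>distr M m_meas X)"
    using X by (simp add: nn_integral_density)
  also have "distr M m_meas X = distr M borel X"
    by (rule distr_cong) (simp_all add: sets_m_meas)
  finally show ?thesis .
qed

lemma AE_distr_pos_neq_if_distributed_m_meas:
  assumes "distributed M m_meas X g"
  shows "AE x in distr M borel X. 0 < x \<and> x \<noteq> c"
proof -
  note X = assms[unfolded distributed_def]
  have "AE x in m_meas. 0 < x \<and> x \<noteq> c"
    unfolding m_meas_def using AE_lborel_singleton[of c]
    by (subst AE_density) (auto simp: indicator_def elim!: eventually_mono split: if_splits)
  then have "AE x in m_meas. 0 < g x \<longrightarrow> 0 < x \<and> x \<noteq> c"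
    by (rule eventually_mono) simp
  then have "AE x in density m_meas g. 0 < x \<and> x \<noteq> c"
    using X by (subst AE_density) auto
  moreover have "distr M borel X = density m_meas g"
    using X by (metis distr_cong sets_m_meas)
  ultimately show ?thesis by (simp only:)
qed

lemma distr_borel_eq_if_distributed:
  assumes "distributed M lborel X g"
  shows "distr M borel X = density lborel g"
  using assms unfolding distributed_def by (metis distr_cong sets_lborel)

lemma nn_integral_neg_ln_density:
  assumes "(\<lambda>z. ennreal (indicator {0<..<1} z * h z * z)) \<in> borel_measurable lborel"
    and "\<And>r. r \<in> {0<..<1} \<Longrightarrow> h r \<ge> 0"
  shows "(\<integral>\<^sup>+z. ennreal (- ln z) \<partial>density lborel (\<lambda>z. ennreal (indicator {0<..<1} z * h z * z))) =
    (\<integral>\<^sup>+ z \<in> {0<..<1}. ennreal (- ln z * h z * z) \<partial>lborel)"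
proof -
  have "ennreal (indicator {0<..<1} z * h z * z) * ennreal (- ln z) = ennreal (- ln z * h z * z) * indicator {0<..<1} z" for z :: real
    using assms(2)[of z] by (cases "z \<in> {0<..<1}") (simp_all add: ac_simps flip: ennreal_mult')
  with assms(1) show ?thesis by (simp add: nn_integral_density)
qed

(* E and T are the common laws of the eps_k and of the theta_k. *)
context
  fixes E T :: "real measure"
  assumes prob_space_E: "prob_space E" and prob_space_T: "prob_space T"
    and sets_E [measurable_cong]: "sets E = sets borel"
    and sets_T [measurable_cong]: "sets T = sets borel"
    and AE_E_pos: "AE y in E. 0 < y"
    and AE_T_unit: "AE z in T. 0 < z \<and> z < 1"
begin

definition coord_law :: "nat + nat \<Rightarrow> real measure" where
  "coord_law = case_sum (\<lambda>_. E) (\<lambda>_. T)"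

definition seq_law :: "(nat + nat \<Rightarrow> real) measure" where
  "seq_law = PiM UNIV coord_law"

lemma coord_law_simps [simp]: "coord_law (Inl k) = E" "coord_law (Inr k) = T"
  by (simp_all add: coord_law_def)

lemma prob_space_coord_law: "prob_space (coord_law i)"
  using prob_space_E prob_space_T by (cases i) simp_all

lemma sets_coord_law [measurable_cong]: "sets (coord_law i) = sets borel"
  using sets_E sets_T by (cases i) simp_all

lemma prob_space_seq_law: "prob_space seq_law"
  unfolding seq_law_def by (intro prob_space_PiM prob_space_coord_law)

lemma sets_seq_law [measurable_cong]: "sets seq_law = sets (PiM UNIV (\<lambda>_. borel))"
  unfolding seq_law_def by (rule sets_PiM_cong) (simp_all add: sets_coord_law)

lemma measurable_shift_seq_law [measurable]: "(\<lambda>w. w \<circ> shift_seq) \<in> measurable seq_law seq_law"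
  unfolding measurable_cong_sets[OF sets_seq_law sets_seq_law] by (rule measurable_comp_shift_seq)

lemma distr_shift_seq_law: "distr seq_law seq_law (\<lambda>w. w \<circ> shift_seq) = seq_law"
proof -
  have "coord_law \<circ> shift_seq = coord_law"
    by (auto simp: coord_law_def shift_seq_def split: sum.split)
  moreover have "inj shift_seq"
  proof (rule injI)
    fix i j show "shift_seq i = shift_seq j \<Longrightarrow> i = j"
      by (cases i; cases j) (simp_all add: shift_seq_def)
  qed
  ultimately show ?thesis
    using distr_PiM_reindex[of UNIV coord_law shift_seq UNIV] prob_space_coord_law
    by (simp add: seq_law_def comp_def restrict_UNIV)
qed

lemma distr_comp_shift_seq_law:
  assumes "G \<in> measurable seq_law N"
  shows "distr seq_law N (\<lambda>w. G (w \<circ> shift_seq)) = distr seq_law N G"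
  using distr_distr[OF assms measurable_shift_seq_law] unfolding distr_shift_seq_law by (simp add: comp_def)

lemma nn_integral_shift_seq_law:
  assumes "G \<in> borel_measurable seq_law"
  shows "(\<integral>\<^sup>+w. G (w \<circ> shift_seq) \<partial>seq_law) = (\<integral>\<^sup>+w. G w \<partial>seq_law)"
proof -
  have "(\<integral>\<^sup>+w. G w \<partial>seq_law) = (\<integral>\<^sup>+w. G w \<partial>distr seq_law seq_law (\<lambda>w. w \<circ> shift_seq))"
    by (simp only: distr_shift_seq_law)
  also have "\<dots> = (\<integral>\<^sup>+w. G (w \<circ> shift_seq) \<partial>seq_law)"
    by (rule nn_integral_distr) (simp_all add: assms)
  finally show ?thesis ..
qed

lemma AE_shift_seq_law:
  assumes "AE w in seq_law. P w"
  shows "AE w in seq_law. P (w \<circ> shift_seq)"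
proof -
  have "AE w in distr seq_law seq_law (\<lambda>w. w \<circ> shift_seq). P w"
    unfolding distr_shift_seq_law by (rule assms)
  then show ?thesis by (rule AE_distrD[OF measurable_shift_seq_law])
qed

lemma nn_integral_seq_law_fun_upd:
  assumes [measurable]: "G \<in> borel_measurable seq_law"
  shows "(\<integral>\<^sup>+w. G w \<partial>seq_law) = (\<integral>\<^sup>+w. (\<integral>\<^sup>+x. G (w(j := x)) \<partial>coord_law j) \<partial>seq_law)"
proof -
  interpret pair_sigma_finite "coord_law j" seq_law
    by (intro pair_sigma_finite.intro prob_space_imp_sigma_finite prob_space_coord_law prob_space_seq_law)
  have upd: "(\<lambda>(x, w). w(j := x)) \<in> measurable (coord_law j \<Otimes>\<^sub>M seq_law) seq_law"
    unfolding seq_law_def split_beta' by (rule measurable_fun_upd[where J = UNIV]) auto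
  have "distr (coord_law j \<Otimes>\<^sub>M seq_law) seq_law (\<lambda>(x, w). w(j := x)) = seq_law"
    using distr_pair_PiM_eq_PiM[of UNIV coord_law j] prob_space_coord_law
    by (simp add: seq_law_def)
  then have "(\<integral>\<^sup>+w. G w \<partial>seq_law) =
      (\<integral>\<^sup>+w. G w \<partial>distr (coord_law j \<Otimes>\<^sub>M seq_law) seq_law (\<lambda>(x, w). w(j := x)))"
    by simp
  also have "\<dots> = (\<integral>\<^sup>+p. G (case p of (x, w) \<Rightarrow> w(j := x)) \<partial>(coord_law j \<Otimes>\<^sub>M seq_law))"
    by (rule nn_integral_distr[OF upd]) simp
  also have "\<dots> = (\<integral>\<^sup>+w. (\<integral>\<^sup>+x. G (w(j := x)) \<partial>coord_law j) \<partial>seq_law)"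
    using measurable_comp[OF upd assms] by (subst nn_integral_snd[symmetric]) (simp_all add: comp_def split_beta')
  finally show ?thesis .
qed

lemma AE_seq_law_unit_coords: "AE w in seq_law. \<forall>k. 0 < w (Inl k) \<and> 0 < w (Inr k) \<and> w (Inr k) < 1"
proof -
  have "AE w in seq_law. 0 < w (Inl k)" for k
    unfolding seq_law_def by (rule AE_PiM_component) (unfold coord_law_simps, simp_all add: prob_space_coord_law AE_E_pos)
  moreover have "AE w in seq_law. 0 < w (Inr k) \<and> w (Inr k) < 1" for k
    unfolding seq_law_def by (rule AE_PiM_component) (unfold coord_law_simps, simp_all add: prob_space_coord_law AE_T_unit[unfolded AE_conj_iff])
  ultimately show ?thesis by (simp add: AE_all_countable)
qed

lemma nn_integral_seq_law_coord:
  assumes "G \<in> borel_measurable borel"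
  shows "(\<integral>\<^sup>+w. G (w i) \<partial>seq_law) = (\<integral>\<^sup>+x. G x \<partial>coord_law i)"
proof -
  have coord: "(\<lambda>w. w i) \<in> measurable seq_law (coord_law i)"
    using measurable_component_singleton[of i UNIV coord_law] by (simp add: seq_law_def)
  have "distr seq_law (coord_law i) (\<lambda>w. w i) = coord_law i"
    using distr_PiM_component[of UNIV coord_law i] prob_space_coord_law by (simp add: seq_law_def)
  then have "(\<integral>\<^sup>+x. G x \<partial>coord_law i) = (\<integral>\<^sup>+x. G x \<partial>distr seq_law (coord_law i) (\<lambda>w. w i))"
    by (simp only:)
  also have "\<dots> = (\<integral>\<^sup>+w. G (w i) \<partial>seq_law)"
    using assms by (intro nn_integral_distr[OF coord]) (simp add: measurable_cong_sets[OF sets_coord_law refl])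
  finally show ?thesis ..
qed

lemma nn_integral_jump_time_eq_nn_integral_neg_ln:
  assumes "\<alpha> > 0"
    and perpetuity_AE: "AE w in seq_law. summable (perpetuity_term \<alpha> w) \<and> 0 < perpetuity \<alpha> w"
  shows "(\<integral>\<^sup>+w. (\<integral>\<^sup>+y. ennreal ((1 / \<alpha>) * ln (y / perpetuity \<alpha> w powr \<alpha> + 1)) \<partial>E) \<partial>seq_law) =
    (\<integral>\<^sup>+z. ennreal (- ln z) \<partial>T)"
proof -
  interpret E: prob_space E by (rule prob_space_E)
  interpret seq: prob_space seq_law by (rule prob_space_seq_law)
  \<comment> \<open>the first jump time of the chain started at perpetuity (w \<circ> shift_seq)\<close>
  define jump where "jump w = (1 / \<alpha>) * ln (w (Inl 1) / perpetuity \<alpha> (w \<circ> shift_seq) powr \<alpha> + 1)" for w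
  have [measurable]: "jump \<in> borel_measurable seq_law"
    unfolding jump_def by measurable
  have "(\<integral>\<^sup>+w. (\<integral>\<^sup>+y. ennreal ((1 / \<alpha>) * ln (y / perpetuity \<alpha> w powr \<alpha> + 1)) \<partial>E) \<partial>seq_law) =
      (\<integral>\<^sup>+w. (\<integral>\<^sup>+y. ennreal ((1 / \<alpha>) * ln (y / perpetuity \<alpha> (w \<circ> shift_seq) powr \<alpha> + 1)) \<partial>E) \<partial>seq_law)"
    by (rule nn_integral_shift_seq_law[symmetric]) measurable
  also have "\<dots> = (\<integral>\<^sup>+w. ennreal (jump w) \<partial>seq_law)"
  proof -
    have "jump (w(Inl 1 := x)) = (1 / \<alpha>) * ln (x / perpetuity \<alpha> (w \<circ> shift_seq) powr \<alpha> + 1)" for w x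
      by (simp only: jump_def perpetuity_fun_upd_Inl_shift_seq fun_upd_same)
    then show ?thesis
      using nn_integral_seq_law_fun_upd[of "\<lambda>w. ennreal (jump w)" "Inl 1"] by (simp only: coord_law_simps) simp
  qed
  also have "\<dots> = (\<integral>\<^sup>+w. ennreal (- ln (w (Inr 1))) \<partial>seq_law)"
  proof (rule nn_integral_eq_if_diff_identically_distributed[OF seq.finite_measure_axioms,
      where U = "\<lambda>w. ln (perpetuity \<alpha> (w \<circ> shift_seq))" and V = "\<lambda>w. ln (perpetuity \<alpha> w)"])
    show "distr seq_law borel (\<lambda>w. ln (perpetuity \<alpha> (w \<circ> shift_seq))) = distr seq_law borel (\<lambda>w. ln (perpetuity \<alpha> w))"
      by (rule distr_comp_shift_seq_law) measurable
    show "AE w in seq_law. 0 \<le> jump w \<and> 0 \<le> - ln (w (Inr 1)) \<and>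
        jump w - - ln (w (Inr 1)) = ln (perpetuity \<alpha> w) - ln (perpetuity \<alpha> (w \<circ> shift_seq))"
      using AE_seq_law_unit_coords AE_shift_seq_law[OF perpetuity_AE]
    proof eventually_elim
      case (elim w)
      then have "\<And>i. 0 < w i" by (metis sum.exhaust)
      with elim \<open>\<alpha> > 0\<close> show ?case
        by (auto simp: jump_def ln_perpetuity_recursion less_imp_le)
    qed
  qed measurable
  also have "\<dots> = (\<integral>\<^sup>+z. ennreal (- ln z) \<partial>T)"
    using nn_integral_seq_law_coord[of "\<lambda>z. ennreal (- ln z)" "Inr 1"] by simp
  finally show ?thesis .
qed

lemma distr_X_inf_eq_distr_perpetuity:
  fixes M :: "'a measure" and \<epsilon> \<theta> :: "nat \<Rightarrow> 'a \<Rightarrow> real"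
  assumes "prob_space M" and indep: "prob_space.indep_vars M (\<lambda>_. borel) (case_sum \<epsilon> \<theta>) UNIV"
    and [measurable]: "\<And>n. \<epsilon> n \<in> borel_measurable M" "\<And>n. \<theta> n \<in> borel_measurable M"
    and "\<And>n. distr M borel (\<epsilon> n) = E" "\<And>n. distr M borel (\<theta> n) = T"
  shows "distr M borel (X_inf \<alpha> \<epsilon> \<theta>) = distr seq_law borel (perpetuity \<alpha>)"
proof -
  define seq where "seq = (\<lambda>\<omega> i. case_sum \<epsilon> \<theta> i \<omega>)"
  have rv: "case_sum \<epsilon> \<theta> i \<in> borel_measurable M" for i
    by (cases i) simp_all
  have "distr M borel (case_sum \<epsilon> \<theta> i) = coord_law i" for i
    using assms(5,6) by (cases i) simp_all
  then have law: "distr M (PiM UNIV (\<lambda>_. borel)) seq = seq_law"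
    using prob_space.indep_vars_iff_distr_eq_PiM[OF assms(1),
        where I = UNIV and M' = "\<lambda>_. borel" and X = "case_sum \<epsilon> \<theta>"] rv indep
    by (simp add: seq_def seq_law_def restrict_UNIV)
  have [measurable]: "seq \<in> measurable M (PiM UNIV (\<lambda>_. borel))"
    unfolding seq_def by (rule measurable_PiM_single') (auto simp: rv space_PiM)
  have "X_inf \<alpha> \<epsilon> \<theta> = perpetuity \<alpha> \<circ> seq"
    by (simp add: fun_eq_iff X_inf_eq_perpetuity seq_def)
  then have "distr M borel (X_inf \<alpha> \<epsilon> \<theta>) = distr (distr M (PiM UNIV (\<lambda>_. borel)) seq) borel (perpetuity \<alpha>)"
    by (simp add: distr_distr)
  then show ?thesis
    by (simp only: law)
qed

end

lemma exponential_theta_laws: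
  assumes "prob_space M"
    and "distributed M lborel \<theta> (\<lambda>z. ennreal (indicator {0<..<1} z * h z * z))"
  shows "prob_space (density lborel (\<lambda>y. ennreal (exponential_density 1 y)))"
    "prob_space (density lborel (\<lambda>z. ennreal (indicator {0<..<1} z * h z * z)))"
    "sets (density lborel (\<lambda>y. ennreal (exponential_density 1 y))) = sets borel"
    "sets (density lborel (\<lambda>z. ennreal (indicator {0<..<1} z * h z * z))) = sets borel"
    "AE y in density lborel (\<lambda>y. ennreal (exponential_density 1 y)). 0 < y"
    "AE z in density lborel (\<lambda>z. ennreal (indicator {0<..<1} z * h z * z)). 0 < z \<and> z < 1"
proof -
  show "prob_space (density lborel (\<lambda>y. ennreal (exponential_density 1 y)))"
    by (rule prob_space_exponential_density) simp
  show "prob_space (density lborel (\<lambda>z. ennreal (indicator {0<..<1} z * h z * z)))"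
    using prob_space.prob_space_distr[OF assms(1) distributed_measurable[OF assms(2)]]
    by (simp add: distributed_distr_eq_density[OF assms(2)])
  have "AE y in lborel. 0 < ennreal (exponential_density 1 y) \<longrightarrow> 0 < y"
    using AE_lborel_singleton[of 0] by eventually_elim (simp add: exponential_density_def)
  then show "AE y in density lborel (\<lambda>y. ennreal (exponential_density 1 y)). 0 < y"
    by (subst AE_density) simp_all
  have "AE z in lborel. 0 < ennreal (indicator {0<..<1} z * h z * z) \<longrightarrow> 0 < z \<and> z < 1"
    by (rule AE_I2) (simp add: indicator_def)
  then show "AE z in density lborel (\<lambda>z. ennreal (indicator {0<..<1} z * h z * z)). 0 < z \<and> z < 1"
    using assms(2) unfolding distributed_def by (subst AE_density) simp_all
qed simp_all

lemma E_t1_eq_nn_integral_neg_ln: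
  fixes M :: "'a measure" and \<epsilon> \<theta> :: "nat \<Rightarrow> 'a \<Rightarrow> real"
  assumes "prob_space M"
    and "\<alpha> > 0"
    and "\<And>r. r \<in> {0<..<1} \<Longrightarrow> h r \<ge> 0"
    and "prob_space.indep_vars M (\<lambda>_. borel) (case_sum \<epsilon> \<theta>) UNIV"
    and "\<And>n. distributed M lborel (\<epsilon> n) (\<lambda>y. ennreal (exponential_density 1 y))"
    and "\<And>n. distributed M lborel (\<theta> n) (\<lambda>z. ennreal (indicator {0<..<1} z * h z * z))"
    and "distributed M m_meas (X_inf \<alpha> \<epsilon> \<theta>) (\<lambda>x. ennreal (f x))"
  shows "E_t1 \<alpha> f = (\<integral>\<^sup>+ z \<in> {0<..<1}. ennreal (- ln z * h z * z) \<partial>lborel)"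
proof -
  define Ed where "Ed = density lborel (\<lambda>y. ennreal (exponential_density 1 y))"
  define Td where "Td = density lborel (\<lambda>z. ennreal (indicator {0<..<1} z * h z * z))"
  note laws = exponential_theta_laws[OF assms(1,6), folded Ed_def Td_def]
  define Q where "Q = seq_law Ed Td"
  note [measurable_cong] = sets_seq_law[OF laws, folded Q_def]
  have X_law: "distr M borel (X_inf \<alpha> \<epsilon> \<theta>) = distr Q borel (perpetuity \<alpha>)"
    unfolding Q_def using assms(5,6)
    by (intro distr_X_inf_eq_distr_perpetuity[OF laws assms(1,4)])
      (simp_all add: distr_borel_eq_if_distributed Ed_def Td_def distributed_def)
  \<comment> \<open>X_inf has a density, so it avoids the junk value of a divergent series almost surely\<close>
  have "AE w in Q. 0 < perpetuity \<alpha> w \<and> perpetuity \<alpha> w \<noteq> (THE s. False) powr (1 / \<alpha>)"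
    using AE_distr_pos_neq_if_distributed_m_meas[OF assms(7)] unfolding X_law
    by (subst (asm) AE_distr_iff) simp_all
  then have "AE w in Q. summable (perpetuity_term \<alpha> w) \<and> 0 < perpetuity \<alpha> w"
    by (rule eventually_mono) (simp add: summable_if_perpetuity_ne_undefined)
  then have "(\<integral>\<^sup>+w. Ex_t1 \<alpha> (perpetuity \<alpha> w) \<partial>Q) = (\<integral>\<^sup>+z. ennreal (- ln z) \<partial>Td)"
    using nn_integral_jump_time_eq_nn_integral_neg_ln[OF laws \<open>\<alpha> > 0\<close>, folded Q_def]
    by (simp add: Ex_t1_eq_nn_integral_exponential[folded Ed_def])
  moreover have "E_t1 \<alpha> f = (\<integral>\<^sup>+w. Ex_t1 \<alpha> (perpetuity \<alpha> w) \<partial>Q)"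
    unfolding E_t1_eq_nn_integral_distr[OF assms(7)] X_law by (rule nn_integral_distr) measurable
  moreover have "(\<integral>\<^sup>+z. ennreal (- ln z) \<partial>Td) = (\<integral>\<^sup>+ z \<in> {0<..<1}. ennreal (- ln z * h z * z) \<partial>lborel)"
    using assms(6)[of 0] unfolding Td_def distributed_def by (intro nn_integral_neg_ln_density assms(3)) auto
  ultimately show ?thesis by simp
qed

theorem lemma3p5:
  fixes M :: "'a measure"
    and \<alpha> :: real
    and h :: "real \<Rightarrow> real"
    and \<epsilon> \<theta> :: "nat \<Rightarrow> 'a \<Rightarrow> real"
    and f :: "real \<Rightarrow> real"
  assumes "prob_space M"
    and "\<alpha> > 0"
    and "h \<in> borel_measurable (restrict_space lborel {0<..<1})"
    and "\<And>r. r \<in> {0<..<1} \<Longrightarrow> h r \<ge> 0"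
    and "(\<integral>\<^sup>+ r \<in> {0<..<1}. ennreal (h r * r) \<partial>lborel) = 1"
    and "prob_space.indep_vars M (\<lambda>_. borel) (case_sum \<epsilon> \<theta>) UNIV"
    and "\<And>n. distributed M lborel (\<epsilon> n) (\<lambda>y. ennreal (exponential_density 1 y))"
    and "\<And>n. distributed M lborel (\<theta> n) (\<lambda>z. ennreal (indicator {0<..<1} z * h z * z))"
    and "distributed M m_meas (X_inf \<alpha> \<epsilon> \<theta>) (\<lambda>x. ennreal (f x))"
    and "\<And>x. x > 0 \<Longrightarrow> f x \<ge> 0"
  shows "(E_t1 \<alpha> f < \<infinity> \<longleftrightarrow>
            (\<integral>\<^sup>+ z \<in> {0<..<1}. ennreal (- ln z * h z * z) \<partial>lborel) < \<infinity>)
       \<and> (E_t1 \<alpha> f < \<infinity> \<longrightarrow>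
            E_t1 \<alpha> f = (\<integral>\<^sup>+ z \<in> {0<..<1}. ennreal (- ln z * h z * z) \<partial>lborel))"
  using E_t1_eq_nn_integral_neg_ln[OF assms(1,2,4,6,7,8,9)] by simp

end
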